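(* Let $\theta_1,\theta_2\in\mathbb{R}$ satisfy $\sin(\theta_1)=0$ and $\sin(\theta_2)=0$. Then the two-player two-strategy game with payoffs \[ G_1=\begin{bmatrix}\frac{1}{\sqrt2}\sin(\theta_1+\frac{\pi}{4})&\frac{1}{\sqrt2}\cos(\theta_1+\frac{\pi}{4})\\ -\frac{1}{\sqrt2}\sin(\theta_1+\frac{\pi}{4})&-\frac{1}{\sqrt2}\cos(\theta_1+\frac{\pi}{4})\end{bmatrix},\qquad G_2=\begin{bmatrix}\frac{1}{\sqrt2}\sin(\theta_2+\frac{\pi}{4})&-\frac{1}{\sqrt2}\sin(\theta_2+\frac{\pi}{4})\\ \frac{1}{\sqrt2}\cos(\theta_2+\frac{\pi}{4})&-\frac{1}{\sqrt2}\cos(\theta_2+\frac{\pi}{4})\end{bmatrix} \] (rows indexed by player 1's strategy, columns by player 2's strategy) is both invariant-zero-sum and invariant-common-payoff.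
   Context: A two-player game $(G_1,G_2)$ is invariant-zero-sum (resp. invariant-common-payoff) if there exist scalars $s_1,s_2>0$ and functions $b_1$ (of player 2's strategy $a_2$) and $b_2$ (of player 1's strategy $a_1$) such that $\hat G_p(a)=s_pG_p(a)+b_p(a_{-p})$ satisfy $\hat G_1(a)+\hat G_2(a)=0$ (resp. $\hat G_1(a)=\hat G_2(a)$) for all joint strategies $a=(a_1,a_2)$. *)

theory Defs
  imports "HOL-Analysis.Analysis"
begin

definition invariant_zero_sum :: "('a \<Rightarrow> 'b \<Rightarrow> real) \<Rightarrow> ('a \<Rightarrow> 'b \<Rightarrow> real) \<Rightarrow> bool" where
  "invariant_zero_sum G1 G2 \<longleftrightarrow>
     (\<exists>s1 s2 :: real. \<exists>b1 :: 'b \<Rightarrow> real. \<exists>b2 :: 'a \<Rightarrow> real. s1 > 0 \<and> s2 > 0 \<and>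
        (\<forall>a1 a2. (s1 * G1 a1 a2 + b1 a2) + (s2 * G2 a1 a2 + b2 a1) = 0))"

definition invariant_common_payoff :: "('a \<Rightarrow> 'b \<Rightarrow> real) \<Rightarrow> ('a \<Rightarrow> 'b \<Rightarrow> real) \<Rightarrow> bool" where
  "invariant_common_payoff G1 G2 \<longleftrightarrow>
     (\<exists>s1 s2 :: real. \<exists>b1 :: 'b \<Rightarrow> real. \<exists>b2 :: 'a \<Rightarrow> real. s1 > 0 \<and> s2 > 0 \<and>
        (\<forall>a1 a2. s1 * G1 a1 a2 + b1 a2 = s2 * G2 a1 a2 + b2 a1))"

(* Build a 2x2 payoff matrix; strategies indexed by {0,1} via nat-free type bool:
   False = first strategy (row/column 1), True = second. *)
definition mat2 :: "real \<Rightarrow> real \<Rightarrow> real \<Rightarrow> real \<Rightarrow> bool \<Rightarrow> bool \<Rightarrow> real" where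
  "mat2 m11 m12 m21 m22 = (\<lambda>i j. if \<not> i then (if \<not> j then m11 else m12)
                                        else (if \<not> j then m21 else m22))"

end

theory Submission
  imports Defs
begin

(* When sin \<theta> = 0 we have sin (\<theta> + pi/4) = cos (\<theta> + pi/4), so each row of G1 and each
   column of G2 is constant: G1 depends only on player 1's strategy and G2 only on player 2's.
   The offsets b1 = -G2, b2 = -G1 then make the game zero-sum, and b1 = G2, b2 = G1 make it
   common-payoff. *)

lemma invariant_zero_sum_if_sum_separable:
  fixes G1 G2 :: "'a \<Rightarrow> 'b \<Rightarrow> real"
  assumes "\<And>a1 a2. G1 a1 a2 + G2 a1 a2 = f a1 + g a2"
  shows "invariant_zero_sum G1 G2"
  unfolding invariant_zero_sum_def
proof (intro exI conjI allI)
  fix a1 a2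
  show "(1 * G1 a1 a2 + - g a2) + (1 * G2 a1 a2 + - f a1) = 0"
    using assms[of a1 a2] by simp
qed simp_all

lemma invariant_common_payoff_if_difference_separable:
  fixes G1 G2 :: "'a \<Rightarrow> 'b \<Rightarrow> real"
  assumes "\<And>a1 a2. G1 a1 a2 - G2 a1 a2 = f a1 + g a2"
  shows "invariant_common_payoff G1 G2"
  unfolding invariant_common_payoff_def
proof (intro exI conjI allI)
  fix a1 a2
  show "1 * G1 a1 a2 + - g a2 = 1 * G2 a1 a2 + f a1"
    using assms[of a1 a2] by simp
qed simp_all

lemma mat2_constant_rows: "mat2 x x y y i j = (if i then y else x)"
  by (simp add: mat2_def)

lemma mat2_constant_columns: "mat2 x y x y i j = (if j then y else x)"
  by (simp add: mat2_def)

lemma sin_add_quarter_pi_eq_cos_add_quarter_pi: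
  fixes \<theta> :: real
  assumes "sin \<theta> = 0"
  shows "sin (\<theta> + pi / 4) = cos (\<theta> + pi / 4)"
  using assms by (simp add: sin_add cos_add sin_45 cos_45)

theorem mainTheorem5:
  fixes \<theta>1 \<theta>2 :: real
  assumes "sin \<theta>1 = 0" and "sin \<theta>2 = 0"
  defines "G1 \<equiv> mat2 (1 / sqrt 2 * sin (\<theta>1 + pi / 4)) (1 / sqrt 2 * cos (\<theta>1 + pi / 4))
                      (- (1 / sqrt 2) * sin (\<theta>1 + pi / 4)) (- (1 / sqrt 2) * cos (\<theta>1 + pi / 4))"
      and "G2 \<equiv> mat2 (1 / sqrt 2 * sin (\<theta>2 + pi / 4)) (- (1 / sqrt 2) * sin (\<theta>2 + pi / 4))
                      (1 / sqrt 2 * cos (\<theta>2 + pi / 4)) (- (1 / sqrt 2) * cos (\<theta>2 + pi / 4))"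
  shows "invariant_zero_sum G1 G2 \<and> invariant_common_payoff G1 G2"
proof -
  define u where "u a1 = G1 a1 False" for a1
  define v where "v a2 = G2 False a2" for a2
  have G1_row: "G1 a1 a2 = u a1" for a1 a2
    unfolding u_def G1_def
      sin_add_quarter_pi_eq_cos_add_quarter_pi[OF \<open>sin \<theta>1 = 0\<close>] mat2_constant_rows ..
  have G2_column: "G2 a1 a2 = v a2" for a1 a2
    unfolding v_def G2_def
      sin_add_quarter_pi_eq_cos_add_quarter_pi[OF \<open>sin \<theta>2 = 0\<close>] mat2_constant_columns ..
  have "invariant_zero_sum G1 G2"
    by (rule invariant_zero_sum_if_sum_separable[where f = u and g = v]) (simp add: G1_row G2_column)
  moreover have "invariant_common_payoff G1 G2"
    by (rule invariant_common_payoff_if_difference_separable[where f = u and g = "\<lambda>a2. - v a2"])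
      (simp add: G1_row G2_column)
  ultimately show ?thesis ..
qed

end
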